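(* Let $G$ be a topological group, $\theta\in\mathrm{Aut}(G)$ an involution, $K:=G^\theta$, and let $(X,o)\supset (G/K,eK)$ be a pointed reflection space containing $G/K$. Let $\{g_i, i\in I\}$ be a generating system of the group $G$. Furthermore, let $T_i\in\mathrm{Trans}(X)|_{G/K}$, $i\in I$, be elements that act on $G/K$ via left multiplication with $g_i$: $T_i( hK)=(g_ih)K$ for all $i\in I$ and $h\in G$. Then the set $\{T_i, {}^{s_o}(T_i^{-1}) \}$ is a generating system of the group $\mathrm{Trans}(X)|_{G/K}$.
   Context: $G/K$ is a reflection space with reflection $(gK,hK)\mapsto \tau(g)\theta(h)K$, where $\tau(g)=g\theta(g)^{-1}$, and base point $o=eK$. A reflection space has continuous $(x,y)\mapsto x.y$ satisfying $x.x=x$, $x.(x.y)=y$, $x.(y.z)=(x.y).(x.z)$. For $x\in X$, $s_x:y\mapsto x.y$ is the elementary reflection, and $\mathrm{Trans}(X)|_{G/K}:=\langle s_{y}\circ s_o\mid y\in G/K\rangle\le\mathrm{Trans}(X)$ is the restricted group of transvections. ${}^hg$ denotes left conjugation $hgh^{-1}$. *)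

theory Defs
  imports "HOL-Analysis.Analysis" "HOL-Algebra.Algebra"
begin

definition topological_group :: "('a, 'b) monoid_scheme \<Rightarrow> 'a topology \<Rightarrow> bool" where
  "topological_group G TG \<longleftrightarrow> group G \<and> topspace TG = carrier G \<and>
     continuous_map (prod_topology TG TG) TG (\<lambda>(x, y). x \<otimes>\<^bsub>G\<^esub> y) \<and>
     continuous_map TG TG (\<lambda>x. inv\<^bsub>G\<^esub> x)"

definition reflection_space :: "'x topology \<Rightarrow> ('x \<Rightarrow> 'x \<Rightarrow> 'x) \<Rightarrow> bool" where
  "reflection_space TX rf \<longleftrightarrow>
     continuous_map (prod_topology TX TX) TX (\<lambda>(x, y). rf x y) \<and>
     (\<forall>x\<in>topspace TX. rf x x = x) \<and>
     (\<forall>x\<in>topspace TX. \<forall>y\<in>topspace TX. rf x (rf x y) = y) \<and>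
     (\<forall>x\<in>topspace TX. \<forall>y\<in>topspace TX. \<forall>z\<in>topspace TX.
        rf x (rf y z) = rf (rf x y) (rf x z))"

definition elem_refl :: "'x set \<Rightarrow> ('x \<Rightarrow> 'x \<Rightarrow> 'x) \<Rightarrow> 'x \<Rightarrow> ('x \<Rightarrow> 'x)" where
  "elem_refl Xs rf x = restrict (rf x) Xs"

definition Trans :: "'x set \<Rightarrow> ('x \<Rightarrow> 'x \<Rightarrow> 'x) \<Rightarrow> ('x \<Rightarrow> 'x) set" where
  "Trans Xs rf = generate (BijGroup Xs)
     {elem_refl Xs rf x \<otimes>\<^bsub>BijGroup Xs\<^esub> elem_refl Xs rf y | x y. x \<in> Xs \<and> y \<in> Xs}"

definition Trans_restr :: "'x set \<Rightarrow> ('x \<Rightarrow> 'x \<Rightarrow> 'x) \<Rightarrow> 'x \<Rightarrow> 'x set \<Rightarrow> ('x \<Rightarrow> 'x) set" where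
  "Trans_restr Xs rf bp Y = generate (BijGroup Xs)
     {elem_refl Xs rf y \<otimes>\<^bsub>BijGroup Xs\<^esub> elem_refl Xs rf bp | y. y \<in> Y}"

definition lconj :: "('a, 'b) monoid_scheme \<Rightarrow> 'a \<Rightarrow> 'a \<Rightarrow> 'a" where
  "lconj G h g = h \<otimes>\<^bsub>G\<^esub> g \<otimes>\<^bsub>G\<^esub> inv\<^bsub>G\<^esub> h"

end

theory Submission imports Defs begin

text \<open>Let \<open>H\<close> be the group generated by the \<open>T\<^sub>i\<close> and the \<open>s\<^sub>o T\<^sub>i\<^sup>-\<^sup>1 s\<^sub>o\<close>.
  Conjugation by \<open>s\<^sub>o\<close> inverts the generators \<open>s\<^sub>y s\<^sub>o\<close> of \<open>Trans(X)|\<^sub>G\<^sub>/\<^sub>K\<close>, so that group is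
  stable under it and contains \<open>H\<close>; \<open>H\<close> is stable under it by construction. Since the \<open>g\<^sub>i\<close>
  generate \<open>G\<close>, every left translation by \<open>h \<in> G\<close> is realised by some \<open>t \<in> H\<close>, so \<open>H\<close> moves
  \<open>o\<close> to every \<open>y = hK\<close>. As \<open>t\<close> is an automorphism of the reflection,
  \<open>s\<^sub>y s\<^sub>o = t s\<^sub>o t\<^sup>-\<^sup>1 s\<^sub>o = t (s\<^sub>o t\<^sup>-\<^sup>1 s\<^sub>o) \<in> H\<close>.\<close>

lemma BijGroup_mult_apply:
  assumes "f \<in> carrier (BijGroup S)" "g \<in> carrier (BijGroup S)" "z \<in> S"
  shows "(f \<otimes>\<^bsub>BijGroup S\<^esub> g) z = f (g z)"
  using assms by (simp add: BijGroup_def compose_def)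

lemma BijGroup_one_apply: "z \<in> S \<Longrightarrow> \<one>\<^bsub>BijGroup S\<^esub> z = z"
  by (simp add: BijGroup_def)

lemma BijGroup_apply_closed: "f \<in> carrier (BijGroup S) \<Longrightarrow> z \<in> S \<Longrightarrow> f z \<in> S"
  by (auto simp: BijGroup_def dest: Bij_imp_funcset)

lemma BijGroup_eqI:
  assumes "f \<in> carrier (BijGroup S)" "g \<in> carrier (BijGroup S)" "\<And>z. z \<in> S \<Longrightarrow> f z = g z"
  shows "f = g"
proof -
  have "f \<in> extensional S" "g \<in> extensional S"
    using assms(1,2) by (auto simp: BijGroup_def Bij_imp_extensional)
  then show ?thesis using assms(3) by (rule extensionalityI)
qed

lemma BijGroup_inv_apply:
  assumes f: "f \<in> carrier (BijGroup S)" and z: "z \<in> S"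
  shows "f ((inv\<^bsub>BijGroup S\<^esub> f) z) = z" "(inv\<^bsub>BijGroup S\<^esub> f) (f z) = z"
    "(inv\<^bsub>BijGroup S\<^esub> f) z \<in> S"
proof -
  interpret B: group "BijGroup S" by (rule group_BijGroup)
  have f': "inv\<^bsub>BijGroup S\<^esub> f \<in> carrier (BijGroup S)" using f by simp
  show "f ((inv\<^bsub>BijGroup S\<^esub> f) z) = z"
    using BijGroup_mult_apply[OF f f' z] B.r_inv[OF f] BijGroup_one_apply[OF z] by simp
  show "(inv\<^bsub>BijGroup S\<^esub> f) (f z) = z"
    using BijGroup_mult_apply[OF f' f z] B.l_inv[OF f] BijGroup_one_apply[OF z] by simp
  show "(inv\<^bsub>BijGroup S\<^esub> f) z \<in> S" using BijGroup_apply_closed[OF f' z] .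
qed

context group
begin

lemma lconj_hom: "x \<in> carrier G \<Longrightarrow> lconj G x \<in> hom G G"
proof (rule homI)
  fix a b assume "x \<in> carrier G" "a \<in> carrier G" "b \<in> carrier G"
  then show "lconj G x (a \<otimes> b) = lconj G x a \<otimes> lconj G x b"
    by (simp add: lconj_def m_assoc[symmetric]) (simp add: m_assoc)
qed (simp add: lconj_def)

lemma lconj_generate_closed:
  assumes "x \<in> carrier G" "W \<subseteq> carrier G" "lconj G x ` W \<subseteq> generate G W"
    and "t \<in> generate G W"
  shows "lconj G x t \<in> generate G W"
proof -
  interpret group_hom G G "lconj G x"
    using assms(1) lconj_hom by (simp add: group_hom_def group_hom_axioms_def is_group)
  have "generate G (lconj G x ` W) \<subseteq> generate G W"
    using assms(3) generate_subgroup_incl[OF _ generate_is_subgroup[OF assms(2)]] by blast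
  then show ?thesis using generate_img[OF assms(2)] assms(4) by blast
qed

lemma lconj_involution:
  assumes "\<sigma> \<in> carrier G" "\<sigma> \<otimes> \<sigma> = \<one>" "x \<in> carrier G"
  shows "lconj G \<sigma> (lconj G \<sigma> x) = x"
proof -
  have "inv \<sigma> = \<sigma>" using assms(1,2) inv_equality by blast
  then show ?thesis using assms by (simp add: lconj_def m_assoc[symmetric]) (simp add: m_assoc)
qed

lemma lconj_generate_symmetrized_closed:
  fixes \<sigma> V defines "W \<equiv> V \<union> (\<lambda>v. lconj G \<sigma> (inv v)) ` V"
  assumes \<sigma>: "\<sigma> \<in> carrier G" "\<sigma> \<otimes> \<sigma> = \<one>" and V: "V \<subseteq> carrier G"
    and t: "t \<in> generate G W"
  shows "lconj G \<sigma> t \<in> generate G W"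
proof (rule lconj_generate_closed[OF \<sigma>(1) _ _ t])
  interpret group_hom G G "lconj G \<sigma>"
    using \<sigma>(1) lconj_hom by (simp add: group_hom_def group_hom_axioms_def is_group)
  have conj_closed: "lconj G \<sigma> x \<in> carrier G" if "x \<in> carrier G" for x
    using that \<sigma>(1) by (simp add: lconj_def)
  show "W \<subseteq> carrier G" unfolding W_def using V conj_closed by auto
  show "lconj G \<sigma> ` W \<subseteq> generate G W"
  proof
    fix w assume "w \<in> lconj G \<sigma> ` W"
    then obtain v where v: "v \<in> V" and "w = lconj G \<sigma> v \<or> w = lconj G \<sigma> (lconj G \<sigma> (inv v))"
      unfolding W_def by auto
    moreover have "lconj G \<sigma> v = inv (lconj G \<sigma> (inv v))"
      using v V hom_inv[of "inv v"] by auto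
    moreover have "lconj G \<sigma> (lconj G \<sigma> (inv v)) = inv v"
      using v V lconj_involution[OF \<sigma>] by auto
    moreover have "v \<in> W" "lconj G \<sigma> (inv v) \<in> W" using v unfolding W_def by auto
    ultimately show "w \<in> generate G W"
      using generate.inv[of _ W G] by auto
  qed
qed

end

definition realized_left_translations ::
    "('x \<Rightarrow> 'x) set \<Rightarrow> ('a, 'b) monoid_scheme \<Rightarrow> ('a \<Rightarrow> 'x) \<Rightarrow> 'a set" where
  "realized_left_translations H G P =
     {a \<in> carrier G. \<exists>t\<in>H. \<forall>h\<in>carrier G. t (P h) = P (a \<otimes>\<^bsub>G\<^esub> h)}"

lemma (in group) subgroup_realized_left_translations:
  assumes H: "subgroup H (BijGroup S)" and P: "\<And>h. h \<in> carrier G \<Longrightarrow> P h \<in> S"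
  shows "subgroup (realized_left_translations H G P) G"
proof (rule subgroupI)
  show "realized_left_translations H G P \<subseteq> carrier G"
    unfolding realized_left_translations_def by auto
  have "\<forall>h\<in>carrier G. \<one>\<^bsub>BijGroup S\<^esub> (P h) = P (\<one> \<otimes> h)"
    by (simp add: P BijGroup_one_apply)
  then have "\<one> \<in> realized_left_translations H G P"
    unfolding realized_left_translations_def using subgroup.one_closed[OF H] by blast
  then show "realized_left_translations H G P \<noteq> {}" by blast
next
  fix a assume "a \<in> realized_left_translations H G P"
  then obtain t where a: "a \<in> carrier G" and t: "t \<in> H" "\<forall>h\<in>carrier G. t (P h) = P (a \<otimes> h)"
    unfolding realized_left_translations_def by auto
  have tc: "t \<in> carrier (BijGroup S)" using subgroup.mem_carrier[OF H t(1)] .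
  have "(inv\<^bsub>BijGroup S\<^esub> t) (P h) = P (inv a \<otimes> h)" if h: "h \<in> carrier G" for h
  proof -
    have "P h = t (P (inv a \<otimes> h))" using t(2) a h by (simp add: m_assoc[symmetric])
    then show ?thesis using BijGroup_inv_apply(2)[OF tc P] a h by simp
  qed
  then show "inv a \<in> realized_left_translations H G P"
    unfolding realized_left_translations_def using a subgroup.m_inv_closed[OF H t(1)] by blast
next
  fix a b
  assume "a \<in> realized_left_translations H G P" "b \<in> realized_left_translations H G P"
  then obtain ta tb where a: "a \<in> carrier G" "ta \<in> H" "\<forall>h\<in>carrier G. ta (P h) = P (a \<otimes> h)"
    and b: "b \<in> carrier G" "tb \<in> H" "\<forall>h\<in>carrier G. tb (P h) = P (b \<otimes> h)"
    unfolding realized_left_translations_def by auto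
  have "ta \<in> carrier (BijGroup S)" "tb \<in> carrier (BijGroup S)"
    using subgroup.mem_carrier[OF H] a(2) b(2) by auto
  then have "\<forall>h\<in>carrier G. (ta \<otimes>\<^bsub>BijGroup S\<^esub> tb) (P h) = P ((a \<otimes> b) \<otimes> h)"
    using a b P by (simp add: BijGroup_mult_apply m_assoc)
  then show "a \<otimes> b \<in> realized_left_translations H G P"
    unfolding realized_left_translations_def using a b subgroup.m_closed[OF H a(2) b(2)] by blast
qed

lemma (in group) carrier_subset_realized_left_translations:
  assumes H: "subgroup H (BijGroup S)" and P: "\<And>h. h \<in> carrier G \<Longrightarrow> P h \<in> S"
    and A: "generate G A = carrier G"
    and A_act: "\<And>a. a \<in> A \<Longrightarrow> \<exists>t\<in>H. \<forall>h\<in>carrier G. t (P h) = P (a \<otimes> h)"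
  shows "carrier G \<subseteq> realized_left_translations H G P"
proof -
  have "A \<subseteq> carrier G" using generate.incl[of _ A G] unfolding A by blast
  then have "A \<subseteq> realized_left_translations H G P"
    unfolding realized_left_translations_def using A_act by blast
  then have "generate G A \<subseteq> realized_left_translations H G P"
    by (rule generate_subgroup_incl[OF _ subgroup_realized_left_translations[OF H P]])
  then show ?thesis unfolding A .
qed

text \<open>A reflection space without topology and without the axiom \<open>x.x = x\<close>.\<close>

locale reflection_set =
  fixes S :: "'x set" and rf :: "'x \<Rightarrow> 'x \<Rightarrow> 'x"
  assumes rf_closed: "\<And>x y. x \<in> S \<Longrightarrow> y \<in> S \<Longrightarrow> rf x y \<in> S"
    and rf_involutive: "\<And>x y. x \<in> S \<Longrightarrow> y \<in> S \<Longrightarrow> rf x (rf x y) = y"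
    and rf_self_distrib:
      "\<And>x y z. x \<in> S \<Longrightarrow> y \<in> S \<Longrightarrow> z \<in> S \<Longrightarrow> rf x (rf y z) = rf (rf x y) (rf x z)"

lemma reflection_space_imp_reflection_set:
  assumes "reflection_space TX rf"
  shows "reflection_set (topspace TX) rf"
proof
  have "continuous_map (prod_topology TX TX) TX (\<lambda>(x, y). rf x y)"
    using assms by (simp add: reflection_space_def)
  then show "rf x y \<in> topspace TX" if "x \<in> topspace TX" "y \<in> topspace TX" for x y
    using continuous_map_image_subset_topspace that by (force simp: topspace_prod_topology)
qed (use assms in \<open>simp_all add: reflection_space_def\<close>)

definition reflection_auts :: "'x set \<Rightarrow> ('x \<Rightarrow> 'x \<Rightarrow> 'x) \<Rightarrow> ('x \<Rightarrow> 'x) set" where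
  "reflection_auts S rf =
     {\<phi> \<in> carrier (BijGroup S). \<forall>a\<in>S. \<forall>b\<in>S. \<phi> (rf a b) = rf (\<phi> a) (\<phi> b)}"

context reflection_set
begin

lemma elem_refl_in_BijGroup:
  assumes x: "x \<in> S"
  shows "elem_refl S rf x \<in> carrier (BijGroup S)"
proof -
  have "bij_betw (rf x) S S"
    by (rule bij_betw_byWitness[where f'="rf x"]) (use x rf_closed rf_involutive in auto)
  then have "bij_betw (restrict (rf x) S) S S"
    by (subst bij_betw_cong[where g="rf x"]) simp_all
  then show ?thesis unfolding elem_refl_def BijGroup_def Bij_def by simp
qed

lemma elem_refl_square:
  assumes x: "x \<in> S"
  shows "elem_refl S rf x \<otimes>\<^bsub>BijGroup S\<^esub> elem_refl S rf x = \<one>\<^bsub>BijGroup S\<^esub>"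
proof (rule BijGroup_eqI)
  interpret B: group "BijGroup S" by (rule group_BijGroup)
  show "elem_refl S rf x \<otimes>\<^bsub>BijGroup S\<^esub> elem_refl S rf x \<in> carrier (BijGroup S)"
    using elem_refl_in_BijGroup[OF x] by simp
  show "\<one>\<^bsub>BijGroup S\<^esub> \<in> carrier (BijGroup S)" by simp
  fix z assume z: "z \<in> S"
  show "(elem_refl S rf x \<otimes>\<^bsub>BijGroup S\<^esub> elem_refl S rf x) z = \<one>\<^bsub>BijGroup S\<^esub> z"
    using BijGroup_mult_apply[OF elem_refl_in_BijGroup[OF x] elem_refl_in_BijGroup[OF x] z]
      BijGroup_one_apply[OF z] z x rf_closed rf_involutive
    by (simp add: elem_refl_def)
qed

lemma elem_refl_inv: "x \<in> S \<Longrightarrow> inv\<^bsub>BijGroup S\<^esub> (elem_refl S rf x) = elem_refl S rf x"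
  by (metis group.inv_equality group_BijGroup elem_refl_in_BijGroup elem_refl_square)

lemma subgroup_reflection_auts: "subgroup (reflection_auts S rf) (BijGroup S)"
proof -
  interpret B: group "BijGroup S" by (rule group_BijGroup)
  show ?thesis
  proof (rule B.subgroupI)
    show "reflection_auts S rf \<subseteq> carrier (BijGroup S)" by (auto simp: reflection_auts_def)
    have "\<one>\<^bsub>BijGroup S\<^esub> \<in> reflection_auts S rf"
      unfolding reflection_auts_def by (simp add: BijGroup_one_apply rf_closed)
    then show "reflection_auts S rf \<noteq> {}" by blast
  next
    fix \<phi> assume "\<phi> \<in> reflection_auts S rf"
    then have \<phi>: "\<phi> \<in> carrier (BijGroup S)" and hom: "\<forall>a\<in>S. \<forall>b\<in>S. \<phi> (rf a b) = rf (\<phi> a) (\<phi> b)"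
      by (auto simp: reflection_auts_def)
    let ?\<psi> = "inv\<^bsub>BijGroup S\<^esub> \<phi>"
    have "?\<psi> (rf a b) = rf (?\<psi> a) (?\<psi> b)" if ab: "a \<in> S" "b \<in> S" for a b
    proof -
      have "rf a b = \<phi> (rf (?\<psi> a) (?\<psi> b))"
        using hom BijGroup_inv_apply[OF \<phi>] ab by simp
      then show ?thesis
        using BijGroup_inv_apply[OF \<phi>] rf_closed ab by simp
    qed
    then show "?\<psi> \<in> reflection_auts S rf" unfolding reflection_auts_def using \<phi> by simp
  next
    fix \<phi> \<psi> assume "\<phi> \<in> reflection_auts S rf" "\<psi> \<in> reflection_auts S rf"
    then show "\<phi> \<otimes>\<^bsub>BijGroup S\<^esub> \<psi> \<in> reflection_auts S rf"
      by (auto simp: reflection_auts_def BijGroup_mult_apply rf_closed BijGroup_apply_closed)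
  qed
qed

lemma elem_refl_in_reflection_auts:
  assumes x: "x \<in> S"
  shows "elem_refl S rf x \<in> reflection_auts S rf"
proof -
  have "elem_refl S rf x (rf a b) = rf (elem_refl S rf x a) (elem_refl S rf x b)"
    if "a \<in> S" "b \<in> S" for a b
    using rf_self_distrib[OF x that] that by (simp add: elem_refl_def rf_closed)
  then show ?thesis unfolding reflection_auts_def using elem_refl_in_BijGroup[OF x] by blast
qed

lemma lconj_elem_refl:
  assumes \<phi>: "\<phi> \<in> reflection_auts S rf" and x: "x \<in> S"
  shows "lconj (BijGroup S) \<phi> (elem_refl S rf x) = elem_refl S rf (\<phi> x)"
proof (rule BijGroup_eqI)
  interpret B: group "BijGroup S" by (rule group_BijGroup)
  have \<phi>c: "\<phi> \<in> carrier (BijGroup S)" and hom: "\<forall>a\<in>S. \<forall>b\<in>S. \<phi> (rf a b) = rf (\<phi> a) (\<phi> b)"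
    using \<phi> by (auto simp: reflection_auts_def)
  show "lconj (BijGroup S) \<phi> (elem_refl S rf x) \<in> carrier (BijGroup S)"
    using \<phi>c elem_refl_in_BijGroup[OF x] by (simp add: lconj_def)
  show "elem_refl S rf (\<phi> x) \<in> carrier (BijGroup S)"
    using elem_refl_in_BijGroup[OF BijGroup_apply_closed[OF \<phi>c x]] .
  fix z assume z: "z \<in> S"
  show "lconj (BijGroup S) \<phi> (elem_refl S rf x) z = elem_refl S rf (\<phi> x) z"
    using \<phi>c elem_refl_in_BijGroup[OF x] z hom x BijGroup_inv_apply[OF \<phi>c z]
    by (simp add: lconj_def BijGroup_mult_apply elem_refl_def)
qed

context
  fixes bp :: 'x and Y :: "'x set"
  assumes bp: "bp \<in> S" and Y: "Y \<subseteq> S"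
begin

lemma Trans_restr_gens_in_BijGroup:
  "{elem_refl S rf y \<otimes>\<^bsub>BijGroup S\<^esub> elem_refl S rf bp | y. y \<in> Y} \<subseteq> carrier (BijGroup S)"
proof -
  interpret B: group "BijGroup S" by (rule group_BijGroup)
  show ?thesis using Y bp elem_refl_in_BijGroup by blast
qed

lemma subgroup_Trans_restr: "subgroup (Trans_restr S rf bp Y) (BijGroup S)"
  unfolding Trans_restr_def
  by (rule group.generate_is_subgroup[OF group_BijGroup Trans_restr_gens_in_BijGroup])

lemma Trans_restr_subset_reflection_auts: "Trans_restr S rf bp Y \<subseteq> reflection_auts S rf"
  unfolding Trans_restr_def
proof (rule group.generate_subgroup_incl[OF group_BijGroup _ subgroup_reflection_auts])
  show "{elem_refl S rf y \<otimes>\<^bsub>BijGroup S\<^esub> elem_refl S rf bp | y. y \<in> Y} \<subseteq> reflection_auts S rf"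
    using Y bp elem_refl_in_reflection_auts subgroup.m_closed[OF subgroup_reflection_auts] by blast
qed

text \<open>Conjugation by \<open>s\<^sub>o\<close> inverts each generator: \<open>s\<^sub>o (s\<^sub>y s\<^sub>o) s\<^sub>o = s\<^sub>o s\<^sub>y = (s\<^sub>y s\<^sub>o)\<^sup>-\<^sup>1\<close>.\<close>

lemma lconj_Trans_restr:
  assumes "t \<in> Trans_restr S rf bp Y"
  shows "lconj (BijGroup S) (elem_refl S rf bp) t \<in> Trans_restr S rf bp Y"
  unfolding Trans_restr_def
proof (rule group.lconj_generate_closed[OF group_BijGroup elem_refl_in_BijGroup[OF bp]
      Trans_restr_gens_in_BijGroup _ assms[unfolded Trans_restr_def]])
  interpret B: group "BijGroup S" by (rule group_BijGroup)
  let ?W = "{elem_refl S rf y \<otimes>\<^bsub>BijGroup S\<^esub> elem_refl S rf bp | y. y \<in> Y}"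
  show "lconj (BijGroup S) (elem_refl S rf bp) ` ?W \<subseteq> generate (BijGroup S) ?W"
  proof
    fix u assume "u \<in> lconj (BijGroup S) (elem_refl S rf bp) ` ?W"
    then obtain w y where w: "w \<in> ?W" "w = elem_refl S rf y \<otimes>\<^bsub>BijGroup S\<^esub> elem_refl S rf bp"
      and y: "y \<in> Y" and u: "u = lconj (BijGroup S) (elem_refl S rf bp) w"
      by auto
    have "u = inv\<^bsub>BijGroup S\<^esub> w"
      using u w(2) y Y bp elem_refl_in_BijGroup elem_refl_inv elem_refl_square
      by (auto simp: lconj_def B.inv_mult_group B.m_assoc)
    then show "u \<in> generate (BijGroup S) ?W" using generate.inv[OF w(1)] by simp
  qed
qed

lemma Trans_restr_subset_of_transitive:
  assumes H: "subgroup H (BijGroup S)" "H \<subseteq> Trans_restr S rf bp Y"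
    and H_lconj: "\<And>t. t \<in> H \<Longrightarrow> lconj (BijGroup S) (elem_refl S rf bp) t \<in> H"
    and H_trans: "\<And>y. y \<in> Y \<Longrightarrow> \<exists>t\<in>H. t bp = y"
  shows "Trans_restr S rf bp Y \<subseteq> H"
  unfolding Trans_restr_def
proof (rule group.generate_subgroup_incl[OF group_BijGroup _ H(1)], safe)
  interpret B: group "BijGroup S" by (rule group_BijGroup)
  let ?s = "elem_refl S rf bp"
  fix y assume y: "y \<in> Y"
  then obtain t where t: "t \<in> H" "t bp = y" using H_trans by blast
  have tc: "t \<in> carrier (BijGroup S)" using subgroup.mem_carrier[OF H(1) t(1)] .
  have "t \<in> reflection_auts S rf" using t(1) H(2) Trans_restr_subset_reflection_auts by blast
  then have "elem_refl S rf y = t \<otimes>\<^bsub>BijGroup S\<^esub> ?s \<otimes>\<^bsub>BijGroup S\<^esub> inv\<^bsub>BijGroup S\<^esub> t"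
    using lconj_elem_refl[OF _ bp] t(2) by (simp add: lconj_def)
  then have "elem_refl S rf y \<otimes>\<^bsub>BijGroup S\<^esub> ?s
      = t \<otimes>\<^bsub>BijGroup S\<^esub> lconj (BijGroup S) ?s (inv\<^bsub>BijGroup S\<^esub> t)"
    using tc elem_refl_in_BijGroup[OF bp] elem_refl_inv[OF bp] by (simp add: lconj_def B.m_assoc)
  also have "\<dots> \<in> H"
    using H_lconj subgroup.m_inv_closed[OF H(1) t(1)] subgroup.m_closed[OF H(1) t(1)] by blast
  finally show "elem_refl S rf y \<otimes>\<^bsub>BijGroup S\<^esub> ?s \<in> H" .
qed

lemma generate_lconj_symmetrized_eq_Trans_restr:
  fixes G :: "('a, 'b) monoid_scheme"
  defines "s \<equiv> elem_refl S rf bp"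
  assumes G: "group G" and V: "V \<subseteq> Trans_restr S rf bp Y"
    and P: "Y = P ` carrier G" "bp = P \<one>\<^bsub>G\<^esub>"
    and A: "generate G A = carrier G"
    and V_act: "\<And>a. a \<in> A \<Longrightarrow> \<exists>t\<in>V. \<forall>h\<in>carrier G. t (P h) = P (a \<otimes>\<^bsub>G\<^esub> h)"
  shows "generate (BijGroup S) (V \<union> (\<lambda>v. lconj (BijGroup S) s (inv\<^bsub>BijGroup S\<^esub> v)) ` V)
      = Trans_restr S rf bp Y"
    (is "generate _ ?W = ?R")
proof -
  interpret B: group "BijGroup S" by (rule group_BijGroup)
  interpret G: group G by (rule G)
  define H where "H = generate (BijGroup S) ?W"
  have R_sub: "subgroup ?R (BijGroup S)" by (rule subgroup_Trans_restr)
  have W_R: "?W \<subseteq> ?R"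
  proof -
    have "lconj (BijGroup S) s (inv\<^bsub>BijGroup S\<^esub> v) \<in> ?R" if "v \<in> ?R" for v
      unfolding s_def using lconj_Trans_restr[OF subgroup.m_inv_closed[OF R_sub that]] .
    then show ?thesis using V by blast
  qed
  then have W_in: "?W \<subseteq> carrier (BijGroup S)" using subgroup.subset[OF R_sub] by blast
  have H_sub: "subgroup H (BijGroup S)" unfolding H_def using B.generate_is_subgroup[OF W_in] .
  have H_R: "H \<subseteq> ?R" unfolding H_def using B.generate_subgroup_incl[OF W_R R_sub] .
  have H_lconj: "lconj (BijGroup S) s t \<in> H" if "t \<in> H" for t
    unfolding H_def s_def
    by (rule B.lconj_generate_symmetrized_closed[OF elem_refl_in_BijGroup[OF bp]
          elem_refl_square[OF bp] _ that[unfolded H_def s_def]])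
      (use V subgroup.subset[OF R_sub] in blast)
  have V_H: "V \<subseteq> H" unfolding H_def using generate.incl[of _ ?W "BijGroup S"] by blast
  have P_in: "P h \<in> S" if "h \<in> carrier G" for h using that Y unfolding P(1) by blast
  have realized: "carrier G \<subseteq> realized_left_translations H G P"
  proof (rule G.carrier_subset_realized_left_translations[OF H_sub P_in A])
    fix a assume "a \<in> A"
    then obtain t where "t \<in> V" "\<forall>h\<in>carrier G. t (P h) = P (a \<otimes>\<^bsub>G\<^esub> h)" using V_act by blast
    then show "\<exists>t\<in>H. \<forall>h\<in>carrier G. t (P h) = P (a \<otimes>\<^bsub>G\<^esub> h)" using V_H by blast
  qed
  have H_trans: "\<exists>t\<in>H. t bp = y" if "y \<in> Y" for y
  proof -
    obtain h where h: "h \<in> carrier G" "y = P h" using \<open>y \<in> Y\<close> P by blast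
    then obtain t where "t \<in> H" "t (P \<one>\<^bsub>G\<^esub>) = P (h \<otimes>\<^bsub>G\<^esub> \<one>\<^bsub>G\<^esub>)"
      using realized unfolding realized_left_translations_def by blast
    then show ?thesis using h P by auto
  qed
  have "?R \<subseteq> H"
    using Trans_restr_subset_of_transitive[OF H_sub H_R] H_lconj H_trans unfolding s_def by blast
  then show ?thesis using H_R unfolding H_def by blast
qed

end

end

theorem proposition4p1:
  fixes G :: "('a, 'b) monoid_scheme" and TG :: "'a topology"
    and \<theta> :: "'a \<Rightarrow> 'a"
    and TQ :: "'a set topology"
    and TX :: "'x topology" and rf :: "'x \<Rightarrow> 'x \<Rightarrow> 'x" and bp :: 'x
    and \<iota> :: "'a set \<Rightarrow> 'x"
    and I :: "'i set" and g :: "'i \<Rightarrow> 'a" and T :: "'i \<Rightarrow> ('x \<Rightarrow> 'x)"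
  defines "K \<equiv> {k \<in> carrier G. \<theta> k = k}"
  defines "GK \<equiv> {h <#\<^bsub>G\<^esub> K | h. h \<in> carrier G}"
  defines "Xs \<equiv> topspace TX"
  assumes topgrp: "topological_group G TG"
    and aut: "\<theta> \<in> iso G G" and cont_\<theta>: "continuous_map TG TG \<theta>"
    and invol: "\<forall>x\<in>carrier G. \<theta> (\<theta> x) = x"
    and quot: "quotient_map TG TQ (\<lambda>h. h <#\<^bsub>G\<^esub> K)"
    and refl: "reflection_space TX rf"
    and emb: "embedding_map TQ TX \<iota>"
    and sub_refl: "\<forall>h1\<in>carrier G. \<forall>h2\<in>carrier G.
        rf (\<iota> (h1 <#\<^bsub>G\<^esub> K)) (\<iota> (h2 <#\<^bsub>G\<^esub> K))
        = \<iota> ((h1 \<otimes>\<^bsub>G\<^esub> inv\<^bsub>G\<^esub> (\<theta> h1) \<otimes>\<^bsub>G\<^esub> \<theta> h2) <#\<^bsub>G\<^esub> K)"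
    and base: "bp = \<iota> (\<one>\<^bsub>G\<^esub> <#\<^bsub>G\<^esub> K)"
    and gen_sys: "g ` I \<subseteq> carrier G" "generate G (g ` I) = carrier G"
    and T_in: "\<forall>i\<in>I. T i \<in> Trans_restr Xs rf bp (\<iota> ` GK)"
    and T_act: "\<forall>i\<in>I. \<forall>h\<in>carrier G. T i (\<iota> (h <#\<^bsub>G\<^esub> K)) = \<iota> ((g i \<otimes>\<^bsub>G\<^esub> h) <#\<^bsub>G\<^esub> K)"
  shows "generate (BijGroup Xs)
           (T ` I \<union> (\<lambda>i. lconj (BijGroup Xs) (elem_refl Xs rf bp) (inv\<^bsub>BijGroup Xs\<^esub> (T i))) ` I)
         = Trans_restr Xs rf bp (\<iota> ` GK)"
proof -
  interpret R: reflection_set Xs rf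
    unfolding Xs_def by (rule reflection_space_imp_reflection_set[OF refl])
  define P where "P h = \<iota> (h <#\<^bsub>G\<^esub> K)" for h
  have P_in: "P h \<in> Xs" if "h \<in> carrier G" for h
  proof -
    have "h <#\<^bsub>G\<^esub> K \<in> topspace TQ"
      using quotient_imp_surjective_map[OF quot] topgrp that by (auto simp: topological_group_def)
    moreover have "\<iota> ` topspace TQ \<subseteq> topspace TX"
      using emb unfolding embedding_map_def
      by (metis homeomorphic_imp_surjective_map inf_le1 topspace_subtopology)
    ultimately show ?thesis unfolding P_def Xs_def by blast
  qed
  have Y: "\<iota> ` GK = P ` carrier G" unfolding GK_def P_def by auto
  have bp: "bp = P \<one>\<^bsub>G\<^esub>" using base by (simp add: P_def)
  have G: "group G" using topgrp by (simp add: topological_group_def)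
  have "generate (BijGroup Xs) (T ` I \<union> (\<lambda>v. lconj (BijGroup Xs) (elem_refl Xs rf bp)
      (inv\<^bsub>BijGroup Xs\<^esub> v)) ` T ` I) = Trans_restr Xs rf bp (\<iota> ` GK)"
  proof (rule R.generate_lconj_symmetrized_eq_Trans_restr[OF _ _ G _ Y bp gen_sys(2)])
    show "bp \<in> Xs" using bp P_in monoid.one_closed[OF group.is_monoid[OF G]] by simp
    show "\<iota> ` GK \<subseteq> Xs" unfolding Y using P_in by (rule image_subsetI)
    show "T ` I \<subseteq> Trans_restr Xs rf bp (\<iota> ` GK)" using T_in by (intro image_subsetI) simp
    fix a assume "a \<in> g ` I"
    then obtain i where "i \<in> I" "a = g i" by blast
    then show "\<exists>t\<in>T ` I. \<forall>h\<in>carrier G. t (P h) = P (a \<otimes>\<^bsub>G\<^esub> h)"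
      using T_act unfolding P_def by blast
  qed
  then show ?thesis unfolding image_image .
qed

end
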